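(* Let $X$ be a real Hilbert space, let $A$ be a closed affine subspace of $X$ and $B$ a nonempty closed convex subset of $X$ (with $A\cap B$ possibly empty). Let $g := P_{\overline{B-A}}\,0$ and assume $g\in B-A$, so that $E:=A\cap(B-g)\neq\varnothing$. Let $T := \mathrm{Id}-P_A+P_BR_A$ and let $x\in X$. Then the sequence $(P_A T^n x)_{n\in\mathbb{N}}$ converges weakly to some point in $E$.
   Context: For a nonempty closed convex set $C\subseteq X$, $P_C$ denotes the metric projection onto $C$ and $R_C:=2P_C-\mathrm{Id}$ the reflector. $T=\tfrac12(\mathrm{Id}+R_BR_A)$ is the Douglas–Rachford operator for the ordered pair $(A,B)$. $\overline{B-A}$ is the closure of the Minkowski difference $B-A=\{b-a: a\in A,\ b\in B\}$, so $g$ is its element of minimal norm. *)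

theory Defs
  imports "HOL-Analysis.Analysis"
begin

definition proj :: "'a::real_inner set \<Rightarrow> 'a \<Rightarrow> 'a" where
  "proj C x = (SOME p. p \<in> C \<and> (\<forall>y\<in>C. dist x p \<le> dist x y))"

definition reflector :: "'a::real_inner set \<Rightarrow> 'a \<Rightarrow> 'a" where
  "reflector C x = 2 *\<^sub>R proj C x - x"

definition mdiff :: "'a::real_vector set \<Rightarrow> 'a set \<Rightarrow> 'a set" where
  "mdiff B A = {b - a | a b. a \<in> A \<and> b \<in> B}"

definition weakly_converges :: "(nat \<Rightarrow> 'a::real_inner) \<Rightarrow> 'a \<Rightarrow> bool" where
  "weakly_converges u p \<longleftrightarrow> (\<forall>y. (\<lambda>n. inner (u n) y) \<longlonglongrightarrow> inner p y)"

end

theory Submission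
  imports Defs "HOL-Library.Diagonal_Subsequence"
begin

(* Let g be the minimal-norm element of closure (B - A). Its variational inequality
   <g, b - a> >= ||g||^2 on B x A forces g to be orthogonal to A - A, so P_A commutes with
   translation by multiples of g. Consequently the shifted iterates z_n = T^n x - n g satisfy
   z_(n+1) = z_n - P_A z_n + b_n with b_n = P_B (R_A T^n x) - g in B - g, and the Fejer
   inequality ||z_(n+1) - e||^2 + ||P_A z_n - b_n||^2 <= ||z_n - e||^2 holds for every e in
   E = A \<inter> (B - g). Since P_A T^n x = P_A z_n, the shadow sequence is bounded; P_A z_n - b_n -> 0
   puts its weak cluster points into A \<inter> (B - g) = E; and <P_A z_n, e2 - e1> = <z_n, e2 - e1>
   converges for e1, e2 in E because each ||z_n - e|| converges. An Opial-type argument then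
   yields weak convergence. Weak sequential compactness of bounded sequences comes from a
   diagonal subsequence and the Riesz representation theorem. *)

section \<open>Metric projection onto closed convex sets\<close>

lemma Cauchy_if_dist_tendsto_infdist:
  fixes C :: "'a::real_inner set"
  assumes C: "convex C" and c: "\<And>n. c n \<in> C"
    and lim: "(\<lambda>n. dist x (c n)) \<longlonglongrightarrow> infdist x C"
  shows "Cauchy c"
proof (rule metric_CauchyI)
  fix e :: real assume "e > 0"
  define d where "d = infdist x C"
  have "(\<lambda>n. (dist x (c n))\<^sup>2) \<longlonglongrightarrow> d\<^sup>2"
    unfolding d_def by (intro tendsto_intros lim)
  then have "\<forall>\<^sub>F n in sequentially. (dist x (c n))\<^sup>2 < d\<^sup>2 + e\<^sup>2 / 4"
    using \<open>e > 0\<close> by (intro order_tendstoD(2)) auto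
  then obtain M where M: "\<And>n. n \<ge> M \<Longrightarrow> (norm (x - c n))\<^sup>2 < d\<^sup>2 + e\<^sup>2 / 4"
    by (auto simp: dist_norm eventually_sequentially)
  have "dist (c m) (c n) < e" if "m \<ge> M" "n \<ge> M" for m n
  proof -
    have "(1/2) *\<^sub>R (c m + c n) \<in> C"
      using convexD[OF C c c, of "1/2" "1/2"] by (simp add: scaleR_add_right)
    then have "d \<le> norm (x - (1/2) *\<^sub>R (c m + c n))"
      unfolding d_def by (metis dist_norm infdist_le)
    then have "d\<^sup>2 \<le> (norm (x - (1/2) *\<^sub>R (c m + c n)))\<^sup>2"
      by (simp add: d_def infdist_nonneg power_mono)
    moreover have "(norm (c m - c n))\<^sup>2 = 2 * (norm (x - c m))\<^sup>2
        + 2 * (norm (x - c n))\<^sup>2 - 4 * (norm (x - (1/2) *\<^sub>R (c m + c n)))\<^sup>2"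
      by (simp add: power2_norm_eq_inner inner_commute algebra_simps)
    ultimately have "(norm (c m - c n))\<^sup>2 < e\<^sup>2"
      using M[OF \<open>m \<ge> M\<close>] M[OF \<open>n \<ge> M\<close>] by linarith
    then show ?thesis using \<open>e > 0\<close> by (simp add: dist_norm power_less_imp_less_base)
  qed
  then show "\<exists>M. \<forall>m\<ge>M. \<forall>n\<ge>M. dist (c m) (c n) < e" by blast
qed

lemma proj_exists:
  fixes C :: "'a::{real_inner,complete_space} set"
  assumes "closed C" "convex C" "C \<noteq> {}"
  shows "\<exists>p\<in>C. \<forall>y\<in>C. dist x p \<le> dist x y"
proof -
  have "(\<lambda>a. dist x a) ` C \<noteq> {}" and "bdd_below ((\<lambda>a. dist x a) ` C)"
    using \<open>C \<noteq> {}\<close> by (auto intro: bdd_belowI[of _ 0])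
  then have "infdist x C \<in> closure ((\<lambda>a. dist x a) ` C)"
    unfolding infdist_notempty[OF \<open>C \<noteq> {}\<close>] by (rule closure_contains_Inf)
  then obtain f where f: "\<And>n. f n \<in> (\<lambda>a. dist x a) ` C" and "f \<longlonglongrightarrow> infdist x C"
    unfolding closure_sequential by blast
  moreover obtain c where c: "\<And>n. c n \<in> C" and "f = (\<lambda>n. dist x (c n))"
  proof -
    from f have "\<forall>n. \<exists>a. a \<in> C \<and> f n = dist x a" by blast
    then obtain c where "\<forall>n. c n \<in> C \<and> f n = dist x (c n)"
      by (elim choice[THEN exE])
    then show ?thesis using that by auto
  qed
  ultimately have lim: "(\<lambda>n. dist x (c n)) \<longlonglongrightarrow> infdist x C"
    by simp
  obtain p where cp: "c \<longlonglongrightarrow> p"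
    using Cauchy_if_dist_tendsto_infdist[OF \<open>convex C\<close> c lim]
    unfolding Cauchy_convergent_iff convergent_def by blast
  have "p \<in> C"
    using closed_sequentially[OF \<open>closed C\<close>] c cp by blast
  moreover have "dist x p = infdist x C"
    using LIMSEQ_unique[OF tendsto_dist[OF tendsto_const cp] lim] .
  ultimately show ?thesis
    using infdist_le[of _ C x] by (intro bexI[of _ p]) auto
qed

lemma
  fixes C :: "'a::{real_inner,complete_space} set"
  assumes "closed C" "convex C" "C \<noteq> {}"
  shows proj_in: "proj C x \<in> C"
    and proj_le_dist: "y \<in> C \<Longrightarrow> dist x (proj C x) \<le> dist x y"
proof -
  have "\<exists>p. p \<in> C \<and> (\<forall>y\<in>C. dist x p \<le> dist x y)"
    using proj_exists[OF assms] by blast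
  then have "proj C x \<in> C \<and> (\<forall>y\<in>C. dist x (proj C x) \<le> dist x y)"
    unfolding proj_def by (rule someI_ex)
  then show "proj C x \<in> C" and "y \<in> C \<Longrightarrow> dist x (proj C x) \<le> dist x y"
    by auto
qed

lemma proj_inner_le:
  fixes C :: "'a::{real_inner,complete_space} set"
  assumes "closed C" "convex C" "y \<in> C"
  shows "inner (x - proj C x) (y - proj C x) \<le> 0"
proof -
  have "C \<noteq> {}" using \<open>y \<in> C\<close> by blast
  then have "proj C x \<in> C" "\<forall>z\<in>C. dist x (proj C x) \<le> dist x z"
    using assms by (simp_all add: proj_in proj_le_dist)
  from any_closest_point_dot[OF \<open>convex C\<close> \<open>closed C\<close> this(1) \<open>y \<in> C\<close> this(2)]
  show ?thesis .
qed

lemma proj_eqI: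
  fixes C :: "'a::{real_inner,complete_space} set"
  assumes "closed C" "convex C" "p \<in> C"
    and vi: "\<And>y. y \<in> C \<Longrightarrow> inner (x - p) (y - p) \<le> 0"
  shows "proj C x = p"
proof -
  define q where "q = proj C x"
  have "q \<in> C" unfolding q_def using assms by (intro proj_in) auto
  have "inner (p - q) (p - q) = inner (x - q) (p - q) + inner (x - p) (q - p)"
    by (simp add: inner_commute algebra_simps)
  also have "\<dots> \<le> 0"
    using proj_inner_le[OF \<open>closed C\<close> \<open>convex C\<close> \<open>p \<in> C\<close>, of x] vi[OF \<open>q \<in> C\<close>]
    by (simp add: q_def)
  finally have "p - q = 0"
    by (metis inner_gt_zero_iff not_le)
  then show ?thesis
    by (simp add: q_def)
qed

lemma proj_affine_orthogonal:
  fixes C :: "'a::{real_inner,complete_space} set"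
  assumes "affine C" "closed C" "a1 \<in> C" "a2 \<in> C"
  shows "inner (x - proj C x) (a1 - a2) = 0"
proof -
  have "convex C" using \<open>affine C\<close> by (rule affine_imp_convex)
  define p where "p = proj C x"
  have "p \<in> C" unfolding p_def using assms \<open>convex C\<close> by (intro proj_in) auto
  have orth: "inner (x - p) (a - p) = 0" if "a \<in> C" for a
  proof -
    have "u *\<^sub>R a + v *\<^sub>R p \<in> C" if "u + v = 1" for u v
      using \<open>affine C\<close> \<open>p \<in> C\<close> \<open>a \<in> C\<close> that unfolding affine_def by blast
    from this[of "-1" 2] have "2 *\<^sub>R p - a \<in> C" by simp
    then have "inner (x - p) ((2 *\<^sub>R p - a) - p) \<le> 0"
      unfolding p_def using assms \<open>convex C\<close> by (intro proj_inner_le) auto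
    moreover have "(2 *\<^sub>R p - a) - p = - (a - p)"
      by (simp add: algebra_simps scaleR_2)
    moreover have "inner (x - p) (a - p) \<le> 0"
      unfolding p_def using assms \<open>convex C\<close> that by (intro proj_inner_le) auto
    ultimately show ?thesis
      by (simp only: inner_minus_right)
  qed
  have "inner (x - p) (a1 - a2) = inner (x - p) (a1 - p) - inner (x - p) (a2 - p)"
    by (simp add: inner_diff_right)
  then show ?thesis
    using orth[OF \<open>a1 \<in> C\<close>] orth[OF \<open>a2 \<in> C\<close>] by (simp add: p_def)
qed

lemma proj_affine_pythagoras:
  fixes C :: "'a::{real_inner,complete_space} set"
  assumes "affine C" "closed C" "e \<in> C"
  shows "(norm (z - e))\<^sup>2 = (norm (z - proj C z))\<^sup>2 + (norm (proj C z - e))\<^sup>2"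
proof -
  have "C \<noteq> {}" using \<open>e \<in> C\<close> by blast
  then have "proj C z \<in> C"
    using assms affine_imp_convex by (intro proj_in) auto
  then have "inner (z - proj C z) (proj C z - e) = 0"
    using assms by (intro proj_affine_orthogonal)
  then show ?thesis
    unfolding power2_norm_eq_inner
    by (simp add: inner_commute algebra_simps)
qed

lemma proj_zero_inner_le:
  fixes C :: "'a::{real_inner,complete_space} set"
  assumes "closed C" "convex C" "y \<in> C"
  shows "inner (proj C 0) (proj C 0) \<le> inner (proj C 0) y"
  using proj_inner_le[OF assms, of 0] by (simp add: inner_diff_right)


section \<open>Weak convergence in Hilbert space\<close>

lemma weakly_converges_in_closed_convex:
  fixes C :: "'a::{real_inner,complete_space} set"
  assumes "closed C" "convex C" "\<And>n. u n \<in> C" "weakly_converges u w"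
  shows "w \<in> C"
proof -
  define p where "p = proj C w"
  have "C \<noteq> {}" using \<open>\<And>n. u n \<in> C\<close> by blast
  have "(\<lambda>n. inner (u n) (w - p) - inner p (w - p)) \<longlonglongrightarrow> inner w (w - p) - inner p (w - p)"
    using \<open>weakly_converges u w\<close> unfolding weakly_converges_def by (intro tendsto_diff) auto
  then have "(\<lambda>n. inner (u n - p) (w - p)) \<longlonglongrightarrow> inner (w - p) (w - p)"
    by (simp add: inner_diff_left)
  moreover have "inner (u n - p) (w - p) \<le> 0" for n
    using proj_inner_le[OF \<open>closed C\<close> \<open>convex C\<close> \<open>u n \<in> C\<close>, of w]
    by (simp add: p_def inner_commute)
  ultimately have "inner (w - p) (w - p) \<le> 0"
    by (intro LIMSEQ_le_const2) auto
  then have "w = p"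
    by (metis inner_gt_zero_iff not_le right_minus_eq)
  moreover have "p \<in> C"
    unfolding p_def using \<open>closed C\<close> \<open>convex C\<close> \<open>C \<noteq> {}\<close> by (rule proj_in)
  ultimately show ?thesis
    by simp
qed

lemma weakly_converges_add_tendsto:
  assumes "weakly_converges u w" "v \<longlonglongrightarrow> c"
  shows "weakly_converges (\<lambda>n. u n + v n) (w + c)"
  unfolding weakly_converges_def
proof
  fix y
  have "(\<lambda>n. inner (v n) y) \<longlonglongrightarrow> inner c y"
    using assms(2) by (intro tendsto_inner tendsto_const)
  then have "(\<lambda>n. inner (u n) y + inner (v n) y) \<longlonglongrightarrow> inner w y + inner c y"
    using assms(1) unfolding weakly_converges_def by (intro tendsto_add) auto
  then show "(\<lambda>n. inner (u n + v n) y) \<longlonglongrightarrow> inner (w + c) y"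
    by (simp add: inner_add_left)
qed

lemma subspace_closure:
  fixes S :: "'a::real_normed_vector set"
  assumes "subspace S"
  shows "subspace (closure S)"
  unfolding subspace_def
proof (intro conjI ballI allI)
  show "0 \<in> closure S"
    using assms closure_subset subspace_0 by blast
next
  fix x y assume "x \<in> closure S" "y \<in> closure S"
  then obtain u v where "\<And>n. u n \<in> S" "u \<longlonglongrightarrow> x" "\<And>n. v n \<in> S" "v \<longlonglongrightarrow> y"
    unfolding closure_sequential by blast
  then show "x + y \<in> closure S"
    unfolding closure_sequential using subspace_add[OF assms]
    by (intro exI[of _ "\<lambda>n. u n + v n"]) (auto intro: tendsto_add)
next
  fix c :: real and x assume "x \<in> closure S"
  then obtain u where "\<And>n. u n \<in> S" "u \<longlonglongrightarrow> x"
    unfolding closure_sequential by blast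
  then show "c *\<^sub>R x \<in> closure S"
    unfolding closure_sequential using subspace_scale[OF assms]
    by (intro exI[of _ "\<lambda>n. c *\<^sub>R u n"]) (auto intro: tendsto_scaleR)
qed

lemma riesz_representation:
  fixes f :: "'a::{real_inner,complete_space} \<Rightarrow> real"
  assumes "bounded_linear f"
  shows "\<exists>e. \<forall>z. f z = inner e z"
proof (cases "\<forall>z. f z = 0")
  case True
  then show ?thesis by (intro exI[of _ 0]) simp
next
  case False
  then obtain y where "f y \<noteq> 0" by blast
  interpret f: bounded_linear f by fact
  define N where "N = {z. f z = 0}"
  have "closed N"
    unfolding N_def by (intro closed_Collect_eq continuous_intros f.continuous_on)
  have "subspace N"
    unfolding N_def subspace_def by (auto simp: f.add f.scale)
  then have "affine N" by (rule subspace_imp_affine)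
  define w where "w = y - proj N y"
  have "proj N y \<in> N"
    using \<open>closed N\<close> \<open>subspace N\<close> subspace_imp_convex subspace_0[OF \<open>subspace N\<close>]
    by (intro proj_in) auto
  then have "f w = f y" by (simp add: w_def N_def f.diff)
  have orth: "inner w n = 0" if "n \<in> N" for n
    using proj_affine_orthogonal[OF \<open>affine N\<close> \<open>closed N\<close> that subspace_0[OF \<open>subspace N\<close>]]
    by (simp add: w_def)
  have "inner w z = (f z / f w) * inner w w" for z
  proof -
    have "z - (f z / f w) *\<^sub>R w \<in> N"
      using \<open>f w = f y\<close> \<open>f y \<noteq> 0\<close> by (simp add: N_def f.diff f.scale)
    then have "inner w (z - (f z / f w) *\<^sub>R w) = 0"
      by (rule orth)
    then show ?thesis
      by (simp add: inner_diff_right)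
  qed
  moreover have "inner w w \<noteq> 0"
    using \<open>f w = f y\<close> \<open>f y \<noteq> 0\<close> f.zero by auto
  ultimately have "f z = inner ((f w / inner w w) *\<^sub>R w) z" for z
    using \<open>f w = f y\<close> \<open>f y \<noteq> 0\<close> by (simp add: field_simps)
  then show ?thesis by blast
qed

lemma weakly_convergent_if_inner_convergent:
  fixes y :: "nat \<Rightarrow> 'a::{real_inner,complete_space}"
  assumes bound: "\<And>k. norm (y k) \<le> M" and conv: "\<And>z. convergent (\<lambda>k. inner (y k) z)"
  shows "\<exists>e. weakly_converges y e"
proof -
  define f where "f z = lim (\<lambda>k. inner (y k) z)" for z
  have lim: "(\<lambda>k. inner (y k) z) \<longlonglongrightarrow> f z" for z
    using conv[of z] by (simp add: f_def convergent_LIMSEQ_iff)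
  have "bounded_linear f"
  proof (rule bounded_linear_intro[of f M])
    fix a b :: 'a and c :: real
    have "(\<lambda>k. inner (y k) (a + b)) \<longlonglongrightarrow> f a + f b"
      using tendsto_add[OF lim[of a] lim[of b]] by (simp add: inner_add_right)
    then show "f (a + b) = f a + f b"
      by (rule LIMSEQ_unique[OF lim])
    have "(\<lambda>k. inner (y k) (c *\<^sub>R a)) \<longlonglongrightarrow> c * f a"
      using tendsto_mult_left[OF lim[of a], of c] by simp
    then show "f (c *\<^sub>R a) = c *\<^sub>R f a"
      using LIMSEQ_unique[OF lim] by simp
    have "\<bar>inner (y k) a\<bar> \<le> norm a * M" for k
      using Cauchy_Schwarz_ineq2[of "y k" a] mult_right_mono[OF bound[of k], of "norm a"]
      by (simp add: mult.commute)
    then show "norm (f a) \<le> norm a * M"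
      using tendsto_rabs[OF lim[of a]] by (simp add: LIMSEQ_le_const2)
  qed
  then obtain e where "\<And>z. f z = inner e z"
    using riesz_representation by blast
  then have "weakly_converges y e"
    unfolding weakly_converges_def using lim by simp
  then show ?thesis ..
qed

lemma convergent_inner_span:
  assumes "\<And>z. z \<in> S \<Longrightarrow> convergent (\<lambda>k. inner (y k) z)" "z \<in> span S"
  shows "convergent (\<lambda>k. inner (y k) z)"
  using assms(2)
proof (induction rule: span_induct_alt)
  case base
  show ?case by (simp add: convergent_const)
next
  case (step c x z)
  then have "convergent (\<lambda>k. c * inner (y k) x + inner (y k) z)"
    using assms(1) by (intro convergent_add convergent_mult convergent_const) auto
  then show ?case
    by (simp add: inner_add_right)
qed

lemma convergent_inner_closure:
  fixes y :: "nat \<Rightarrow> 'a::real_inner"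
  assumes bound: "\<And>k. norm (y k) \<le> M" and conv: "\<And>z. z \<in> S \<Longrightarrow> convergent (\<lambda>k. inner (y k) z)"
    and "z \<in> closure S"
  shows "convergent (\<lambda>k. inner (y k) z)"
proof -
  have "M \<ge> 0" using bound[of 0] norm_ge_zero[of "y 0"] by linarith
  have "Cauchy (\<lambda>k. inner (y k) z)"
  proof (rule metric_CauchyI)
    fix e :: real assume "e > 0"
    have "e / (3 * (M + 1)) > 0"
      using \<open>e > 0\<close> \<open>M \<ge> 0\<close> by simp
    then obtain z' where "z' \<in> S" and z': "dist z' z < e / (3 * (M + 1))"
      using \<open>z \<in> closure S\<close> unfolding closure_approachable by blast
    have "Cauchy (\<lambda>k. inner (y k) z')"
      using conv[OF \<open>z' \<in> S\<close>] by (rule convergent_Cauchy)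
    then obtain N where N: "\<And>m n. m \<ge> N \<Longrightarrow> n \<ge> N \<Longrightarrow> dist (inner (y m) z') (inner (y n) z') < e / 3"
      using metric_CauchyD[of _ "e / 3"] \<open>e > 0\<close> by force
    have close: "\<bar>inner (y k) z - inner (y k) z'\<bar> < e / 3" for k
    proof -
      have "\<bar>inner (y k) z - inner (y k) z'\<bar> \<le> norm (y k) * norm (z - z')"
        using Cauchy_Schwarz_ineq2[of "y k" "z - z'"] by (simp add: inner_diff_right)
      also have "\<dots> \<le> M * (e / (3 * (M + 1)))"
        using bound[of k] z' \<open>M \<ge> 0\<close>
        by (intro mult_mono) (auto simp: dist_norm norm_minus_commute)
      also have "\<dots> < e / 3"
        using \<open>M \<ge> 0\<close> \<open>e > 0\<close> by (simp add: field_simps)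
      finally show ?thesis .
    qed
    have "dist (inner (y m) z) (inner (y n) z) < e" if "m \<ge> N" "n \<ge> N" for m n
      using close[of m] close[of n] N[OF that] by (simp add: dist_real_def abs_if split: if_splits)
    then show "\<exists>N. \<forall>m\<ge>N. \<forall>n\<ge>N. dist (inner (y m) z) (inner (y n) z) < e"
      by blast
  qed
  then show ?thesis
    by (simp add: Cauchy_convergent_iff)
qed

lemma inner_convergent_diagonal_subseq:
  fixes x :: "nat \<Rightarrow> 'a::real_inner"
  assumes bound: "\<And>n. norm (x n) \<le> M"
  shows "\<exists>r. strict_mono r \<and> (\<forall>m. convergent (\<lambda>k. inner (x (r k)) (x m)))"
proof -
  interpret subseqs "\<lambda>m s. convergent (\<lambda>k. inner (x (s k)) (x m))"
  proof
    fix m and s :: "nat \<Rightarrow> nat"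
    have "\<bar>inner (x (s k)) (x m)\<bar> \<le> M * M" for k
      using Cauchy_Schwarz_ineq2[of "x (s k)" "x m"] bound[of "s k"] bound[of m]
      by (meson mult_mono norm_ge_zero order_trans)
    then have "bounded (range (\<lambda>k. inner (x (s k)) (x m)))"
      unfolding bounded_iff by auto
    then obtain r l where "strict_mono r" "((\<lambda>k. inner (x (s k)) (x m)) \<circ> r) \<longlonglongrightarrow> l"
      using bounded_imp_convergent_subsequence by blast
    then show "\<exists>r. strict_mono r \<and> convergent (\<lambda>k. inner (x ((s \<circ> r) k)) (x m))"
      by (auto simp: convergent_def o_def)
  qed
  have "convergent (\<lambda>k. inner (x (diagseq k)) (x m))" for m
  proof -
    have "convergent (\<lambda>k. inner (x ((diagseq \<circ> (+) (Suc m)) k)) (x m))"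
    proof (rule diagseq_holds)
      fix r s n assume "strict_mono (r :: nat \<Rightarrow> nat)" "convergent (\<lambda>k. inner (x (s k)) (x n))"
      then show "convergent (\<lambda>k. inner (x ((s \<circ> r) k)) (x n))"
        using convergent_subseq_convergent by (auto simp: o_def)
    qed
    then show ?thesis
      using convergent_ignore_initial_segment[of "\<lambda>k. inner (x (diagseq k)) (x m)" "Suc m"]
      by (simp add: o_def add.commute)
  qed
  then show ?thesis
    using subseq_diagseq by blast
qed

lemma bounded_imp_weakly_convergent_subseq:
  fixes x :: "nat \<Rightarrow> 'a::{real_inner,complete_space}"
  assumes bound: "\<And>n. norm (x n) \<le> M"
  shows "\<exists>r w. strict_mono r \<and> weakly_converges (x \<circ> r) w"
proof -
  obtain r where "strict_mono r" and conv: "\<And>m. convergent (\<lambda>k. inner (x (r k)) (x m))"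
    using inner_convergent_diagonal_subseq[of x M, OF bound] by blast
  define K where "K = closure (span (range x))"
  have "affine K" "closed K"
    unfolding K_def by (simp_all add: subspace_imp_affine subspace_closure)
  have "0 \<in> K" and xK: "x n \<in> K" for n
    unfolding K_def using closure_subset[of "span (range x)"] by (auto intro: span_zero span_base)
  have "convergent (\<lambda>k. inner (x (r k)) z)" if "z \<in> span (range x)" for z
    using that by (rule convergent_inner_span[rotated]) (use conv in auto)
  then have convK: "convergent (\<lambda>k. inner (x (r k)) z)" if "z \<in> K" for z
    using convergent_inner_closure[of "\<lambda>k. x (r k)" M "span (range x)" z] bound that
    unfolding K_def by blast
  have "convergent (\<lambda>k. inner (x (r k)) z)" for z
  proof -
    have "inner (z - proj K z) (x (r k) - 0) = 0" for k
      by (rule proj_affine_orthogonal[OF \<open>affine K\<close> \<open>closed K\<close> xK \<open>0 \<in> K\<close>])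
    then have "inner (x (r k)) z = inner (x (r k)) (proj K z)" for k
      by (simp add: inner_diff_left inner_commute[of "x (r k)"])
    moreover have "proj K z \<in> K"
      using \<open>affine K\<close> \<open>closed K\<close> \<open>0 \<in> K\<close> by (intro proj_in affine_imp_convex) auto
    ultimately show ?thesis
      using convK by simp
  qed
  then obtain w where "weakly_converges (\<lambda>k. x (r k)) w"
    using weakly_convergent_if_inner_convergent[of "\<lambda>k. x (r k)" M] bound by blast
  then show ?thesis
    using \<open>strict_mono r\<close> unfolding comp_def by blast
qed

lemma not_LIMSEQ_imp_subseq_bounded_away:
  fixes X :: "nat \<Rightarrow> 'a::metric_space"
  assumes "\<not> X \<longlonglongrightarrow> L"
  obtains \<epsilon> and r :: "nat \<Rightarrow> nat" where "\<epsilon> > 0" "strict_mono r" "\<And>k. \<epsilon> \<le> dist (X (r k)) L"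
proof -
  have "\<exists>\<epsilon>>0. \<forall>N. \<exists>n\<ge>N. \<epsilon> \<le> dist (X n) L"
    using assms unfolding lim_sequentially by (simp add: not_less)
  then obtain \<epsilon> where "\<epsilon> > 0" and frequent: "\<forall>N. \<exists>n\<ge>N. \<epsilon> \<le> dist (X n) L"
    by blast
  define S where "S = {n. \<epsilon> \<le> dist (X n) L}"
  have "infinite S"
    unfolding S_def infinite_nat_iff_unbounded_le using frequent by simp
  then have "strict_mono (enumerate S)" and "\<And>k. enumerate S k \<in> S"
    by (simp_all add: strict_mono_enumerate enumerate_in_set)
  then show ?thesis
    using that[of \<epsilon> "enumerate S"] \<open>\<epsilon> > 0\<close> unfolding S_def by simp
qed

lemma opial_weakly_converges:
  fixes s :: "nat \<Rightarrow> 'a::{real_inner,complete_space}"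
  assumes bound: "\<And>n. norm (s n) \<le> M"
    and cluster: "\<And>r w. strict_mono r \<Longrightarrow> weakly_converges (s \<circ> r) w \<Longrightarrow> w \<in> E"
    and conv: "\<And>e1 e2. e1 \<in> E \<Longrightarrow> e2 \<in> E \<Longrightarrow> convergent (\<lambda>n. inner (s n) (e2 - e1))"
  shows "\<exists>e\<in>E. weakly_converges s e"
proof -
  have limit_along: "inner w (w2 - w1) = L"
    if "(\<lambda>n. inner (s n) (w2 - w1)) \<longlonglongrightarrow> L" "strict_mono r" "weakly_converges (s \<circ> r) w"
    for r w w1 w2 L
  proof -
    have "((\<lambda>n. inner (s n) (w2 - w1)) \<circ> r) \<longlonglongrightarrow> L"
      using that(1,2) by (rule LIMSEQ_subseq_LIMSEQ)
    moreover have "((\<lambda>n. inner (s n) (w2 - w1)) \<circ> r) \<longlonglongrightarrow> inner w (w2 - w1)"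
      using that(3) unfolding weakly_converges_def comp_def by blast
    ultimately show ?thesis
      by (rule LIMSEQ_unique[symmetric])
  qed
  have unique: "w1 = w2"
    if subseqs: "strict_mono r1" "weakly_converges (s \<circ> r1) w1"
      "strict_mono r2" "weakly_converges (s \<circ> r2) w2" for r1 r2 w1 w2
  proof -
    obtain L where "(\<lambda>n. inner (s n) (w2 - w1)) \<longlonglongrightarrow> L"
      using conv[OF cluster[OF subseqs(1,2)] cluster[OF subseqs(3,4)]] unfolding convergent_def by blast
    then have "inner w1 (w2 - w1) = L" and "inner w2 (w2 - w1) = L"
      using limit_along subseqs by blast+
    then have "inner (w2 - w1) (w2 - w1) = 0"
      by (simp add: inner_diff_left)
    then show ?thesis
      by simp
  qed
  obtain r w where "strict_mono r" "weakly_converges (s \<circ> r) w"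
    using bounded_imp_weakly_convergent_subseq[of s M, OF bound] by blast
  have "(\<lambda>n. inner (s n) y) \<longlonglongrightarrow> inner w y" for y
  proof (rule ccontr)
    assume "\<not> (\<lambda>n. inner (s n) y) \<longlonglongrightarrow> inner w y"
    then obtain \<epsilon> and r2 :: "nat \<Rightarrow> nat" where "\<epsilon> > 0" "strict_mono r2"
      and far: "\<And>k. \<epsilon> \<le> dist (inner (s (r2 k)) y) (inner w y)"
      by (rule not_LIMSEQ_imp_subseq_bounded_away) (rule that)
    obtain r3 :: "nat \<Rightarrow> nat" and w' where "strict_mono r3" and w': "weakly_converges ((s \<circ> r2) \<circ> r3) w'"
      using bounded_imp_weakly_convergent_subseq[of "s \<circ> r2" M] bound by auto
    have "strict_mono (r2 \<circ> r3)"
      using \<open>strict_mono r2\<close> \<open>strict_mono r3\<close> by (rule strict_mono_o)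
    moreover have "weakly_converges (s \<circ> (r2 \<circ> r3)) w'"
      using w' by (simp add: comp_assoc)
    ultimately have "w' = w"
      using unique \<open>strict_mono r\<close> \<open>weakly_converges (s \<circ> r) w\<close> by blast
    then have "(\<lambda>k. dist (inner (s (r2 (r3 k))) y) (inner w y)) \<longlonglongrightarrow> dist (inner w y) (inner w y)"
      using w' unfolding weakly_converges_def comp_def by (intro tendsto_dist tendsto_const) blast
    then have "\<epsilon> \<le> 0"
      using far by (simp add: LIMSEQ_le_const)
    then show False
      using \<open>\<epsilon> > 0\<close> by simp
  qed
  then show ?thesis
    using cluster[OF \<open>strict_mono r\<close> \<open>weakly_converges (s \<circ> r) w\<close>]
    unfolding weakly_converges_def by blast
qed


section \<open>The Douglas--Rachford iteration for an affine and a convex set\<close>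

lemma inner_const_on_affine_if_bounded_above:
  assumes "affine A" "a1 \<in> A" "a2 \<in> A" and bound: "\<And>a. a \<in> A \<Longrightarrow> inner v a \<le> c"
  shows "inner v a1 = inner v a2"
proof (rule ccontr)
  define d where "d = inner v a1 - inner v a2"
  assume "inner v a1 \<noteq> inner v a2"
  then have "d \<noteq> 0" by (simp add: d_def)
  define t where "t = (c + 1 - inner v a2) / d"
  have "u *\<^sub>R a1 + w *\<^sub>R a2 \<in> A" if "u + w = 1" for u w
    using \<open>affine A\<close> \<open>a1 \<in> A\<close> \<open>a2 \<in> A\<close> that unfolding affine_def by blast
  then have "inner v (t *\<^sub>R a1 + (1 - t) *\<^sub>R a2) \<le> c"
    by (intro bound) simp
  moreover have "inner v (t *\<^sub>R a1 + (1 - t) *\<^sub>R a2) = inner v a2 + t * d"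
    by (simp add: d_def algebra_simps)
  moreover have "t * d = c + 1 - inner v a2"
    using \<open>d \<noteq> 0\<close> by (simp add: t_def)
  ultimately show False
    by linarith
qed

lemma
  fixes d c :: "nat \<Rightarrow> real"
  assumes descent: "\<And>n. d (Suc n) + c n \<le> d n" and "\<And>n. 0 \<le> c n" and "\<And>n. 0 \<le> d n"
  shows descent_convergent: "convergent d"
    and descent_decrements_tendsto_zero: "c \<longlonglongrightarrow> 0"
proof -
  have "d (Suc n) \<le> d n" for n
    using descent[of n] \<open>0 \<le> c n\<close> by linarith
  then have "decseq d"
    by (rule decseq_SucI)
  moreover have "\<forall>n. 0 \<le> d n"
    using \<open>\<And>n. 0 \<le> d n\<close> by blast
  ultimately obtain L where L: "d \<longlonglongrightarrow> L"
    by (rule decseq_convergent)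
  then show "convergent d"
    by (rule convergentI)
  show "c \<longlonglongrightarrow> 0"
  proof (rule tendsto_sandwich[of "\<lambda>n. 0" _ _ "\<lambda>n. d n - d (Suc n)"])
    show "eventually (\<lambda>n. 0 \<le> c n) sequentially"
      using \<open>\<And>n. 0 \<le> c n\<close> by simp
    show "eventually (\<lambda>n. c n \<le> d n - d (Suc n)) sequentially"
      using descent by (simp add: algebra_simps)
    show "(\<lambda>n. d n - d (Suc n)) \<longlonglongrightarrow> 0"
      using tendsto_diff[OF L LIMSEQ_Suc[OF L]] by simp
  qed simp
qed

lemma convex_mdiff:
  assumes "convex A" "convex B"
  shows "convex (mdiff B A)"
proof -
  have "mdiff B A = (\<Union>b\<in>B. \<Union>a\<in>A. {b - a})"
    unfolding mdiff_def by blast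
  then show ?thesis
    using assms by (simp add: convex_differences)
qed

definition douglas_rachford :: "'a::real_inner set \<Rightarrow> 'a set \<Rightarrow> 'a \<Rightarrow> 'a" where
  "douglas_rachford A B y = y - proj A y + proj B (reflector A y)"

text \<open>The vector \<open>g\<close> abstracts the gap vector: \<open>gap\<close> is the variational inequality
  characterizing the element of minimal norm in \<open>closure (B - A)\<close>, and \<open>nearest_A\<close> is the
  set \<open>E\<close> of the theorem.\<close>

locale douglas_rachford_gap =
  fixes A B :: "'a::{real_inner,complete_space} set" and g :: 'a
  assumes affine_A: "affine A" and closed_A: "closed A"
    and convex_B: "convex B" and closed_B: "closed B"
    and gap: "\<And>a b. a \<in> A \<Longrightarrow> b \<in> B \<Longrightarrow> inner g g \<le> inner g (b - a)"
    and nearest_nonempty: "A \<inter> (\<lambda>b. b - g) ` B \<noteq> {}"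
begin

abbreviation nearest_A :: "'a set" where
  "nearest_A \<equiv> A \<inter> (\<lambda>b. b - g) ` B"

lemma convex_A: "convex A"
  using affine_A by (rule affine_imp_convex)

lemma A_nonempty: "A \<noteq> {}" and B_nonempty: "B \<noteq> {}"
  using nearest_nonempty by auto

lemma proj_A_in: "proj A y \<in> A"
  using closed_A convex_A A_nonempty by (rule proj_in)

lemma proj_B_in: "proj B y \<in> B"
  using closed_B convex_B B_nonempty by (rule proj_in)

lemma gap_orthogonal:
  assumes "a1 \<in> A" "a2 \<in> A"
  shows "inner g a1 = inner g a2"
proof -
  obtain b where "b \<in> B" using B_nonempty by blast
  have "inner g a \<le> inner g b - inner g g" if "a \<in> A" for a
    using gap[OF that \<open>b \<in> B\<close>] by (simp add: inner_diff_right)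
  then show ?thesis
    by (rule inner_const_on_affine_if_bounded_above[OF affine_A assms])
qed

lemma proj_A_add_gap: "proj A (y + t *\<^sub>R g) = proj A y"
proof (rule proj_eqI[OF closed_A convex_A proj_A_in])
  fix a assume "a \<in> A"
  have "inner (y + t *\<^sub>R g - proj A y) (a - proj A y)
      = inner (y - proj A y) (a - proj A y) + t * (inner g a - inner g (proj A y))"
    by (simp add: algebra_simps)
  also have "\<dots> = 0"
    using proj_affine_orthogonal[OF affine_A closed_A \<open>a \<in> A\<close> proj_A_in]
      gap_orthogonal[OF \<open>a \<in> A\<close> proj_A_in] by simp
  finally show "inner (y + t *\<^sub>R g - proj A y) (a - proj A y) \<le> 0"
    by simp
qed

lemma douglas_rachford_step_fejer:
  assumes "k \<ge> 0" "e \<in> A" "e + g \<in> B"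
  shows "(norm (douglas_rachford A B (z + k *\<^sub>R g) - (k + 1) *\<^sub>R g - e))\<^sup>2
      + (norm (proj A z - proj B (reflector A (z + k *\<^sub>R g)) + g))\<^sup>2 \<le> (norm (z - e))\<^sup>2"
proof -
  define s where "s = proj A z"
  define b where "b = proj B (reflector A (z + k *\<^sub>R g)) - g"
  define u where "u = z - s"
  have "inner u (s - e) = 0"
    unfolding u_def s_def using affine_A closed_A proj_A_in \<open>e \<in> A\<close> by (rule proj_affine_orthogonal)
  have "inner g (e - b) \<le> 0"
    using gap[OF \<open>e \<in> A\<close>, of "b + g"] proj_B_in by (simp add: b_def inner_diff_right)
  then have gap_term: "(k + 1) * inner g (e - b) \<le> 0"
    using \<open>k \<ge> 0\<close> by (simp add: mult_nonneg_nonpos)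
  have "inner (reflector A (z + k *\<^sub>R g) - (b + g)) ((e + g) - (b + g)) \<le> 0"
    unfolding b_def using closed_B convex_B \<open>e + g \<in> B\<close> by (simp add: proj_inner_le)
  moreover have "reflector A (z + k *\<^sub>R g) - (b + g) = (s - b) - u - (k + 1) *\<^sub>R g"
    by (simp add: reflector_def proj_A_add_gap s_def u_def algebra_simps scaleR_2)
  ultimately have "inner ((s - b) - u) (e - b) \<le> (k + 1) * inner g (e - b)"
    by (simp add: inner_diff_left)
  with gap_term have "inner ((s - b) - u) (e - b) \<le> 0"
    by linarith
  moreover have "(norm (u + s - e))\<^sup>2 = (norm (u + b - e))\<^sup>2 + (norm (s - b))\<^sup>2
      + 2 * inner u (s - e) - 2 * inner ((s - b) - u) (e - b)"
    unfolding power2_norm_eq_inner by (simp add: inner_commute algebra_simps)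
  moreover have "douglas_rachford A B (z + k *\<^sub>R g) - (k + 1) *\<^sub>R g - e = u + b - e"
    by (simp add: douglas_rachford_def proj_A_add_gap s_def u_def b_def algebra_simps)
  moreover have "proj A z - proj B (reflector A (z + k *\<^sub>R g)) + g = s - b"
    by (simp add: s_def b_def)
  moreover have "z - e = u + s - e"
    by (simp add: u_def)
  ultimately show ?thesis
    using \<open>inner u (s - e) = 0\<close> by simp
qed

definition shifted_iterate :: "'a \<Rightarrow> nat \<Rightarrow> 'a" where
  "shifted_iterate x n = (douglas_rachford A B ^^ n) x - real n *\<^sub>R g"

definition dr_shadow :: "'a \<Rightarrow> nat \<Rightarrow> 'a" where
  "dr_shadow x n = proj A ((douglas_rachford A B ^^ n) x)"

definition dr_residual :: "'a \<Rightarrow> nat \<Rightarrow> 'a" where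
  "dr_residual x n = dr_shadow x n - proj B (reflector A ((douglas_rachford A B ^^ n) x)) + g"

lemma iterate_eq_shifted: "(douglas_rachford A B ^^ n) x = shifted_iterate x n + real n *\<^sub>R g"
  by (simp add: shifted_iterate_def)

lemma dr_shadow_eq_proj_shifted: "dr_shadow x n = proj A (shifted_iterate x n)"
  by (simp add: dr_shadow_def iterate_eq_shifted proj_A_add_gap)

lemma shifted_iterate_fejer:
  assumes "e \<in> nearest_A"
  shows "(norm (shifted_iterate x (Suc n) - e))\<^sup>2 + (norm (dr_residual x n))\<^sup>2
    \<le> (norm (shifted_iterate x n - e))\<^sup>2"
proof -
  have "e \<in> A" "e + g \<in> B"
    using assms by auto
  then have "(norm (douglas_rachford A B (shifted_iterate x n + real n *\<^sub>R g)
        - (real n + 1) *\<^sub>R g - e))\<^sup>2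
      + (norm (proj A (shifted_iterate x n)
        - proj B (reflector A (shifted_iterate x n + real n *\<^sub>R g)) + g))\<^sup>2
      \<le> (norm (shifted_iterate x n - e))\<^sup>2"
    by (intro douglas_rachford_step_fejer) simp_all
  moreover have "douglas_rachford A B ((douglas_rachford A B ^^ n) x) - (real n + 1) *\<^sub>R g
      = shifted_iterate x (Suc n)"
    by (simp add: shifted_iterate_def)
  ultimately show ?thesis
    by (simp only: dr_residual_def dr_shadow_eq_proj_shifted iterate_eq_shifted[symmetric])
qed

lemma shifted_dist_convergent:
  assumes "e \<in> nearest_A"
  shows "convergent (\<lambda>n. (norm (shifted_iterate x n - e))\<^sup>2)"
  using shifted_iterate_fejer[OF assms]
  by (rule descent_convergent[where c = "\<lambda>n. (norm (dr_residual x n))\<^sup>2"]) simp_all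

lemma dr_residual_tendsto_zero: "dr_residual x \<longlonglongrightarrow> 0"
proof -
  obtain e where "e \<in> nearest_A"
    using nearest_nonempty by blast
  then have "(\<lambda>n. (norm (dr_residual x n))\<^sup>2) \<longlonglongrightarrow> 0"
    using shifted_iterate_fejer
    by (intro descent_decrements_tendsto_zero[where d = "\<lambda>n. (norm (shifted_iterate x n - e))\<^sup>2"])
      simp_all
  then have "(\<lambda>n. sqrt ((norm (dr_residual x n))\<^sup>2)) \<longlonglongrightarrow> sqrt 0"
    by (rule tendsto_real_sqrt)
  then show ?thesis
    by (simp add: tendsto_norm_zero_iff)
qed

lemma shifted_dist_le_initial:
  assumes "e \<in> nearest_A"
  shows "norm (shifted_iterate x n - e) \<le> norm (shifted_iterate x 0 - e)"
proof (induction n)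
  case (Suc n)
  have "(norm (shifted_iterate x (Suc n) - e))\<^sup>2 \<le> (norm (shifted_iterate x n - e))\<^sup>2"
    using shifted_iterate_fejer[OF assms, of x n] zero_le_power2[of "norm (dr_residual x n)"]
    by linarith
  then have "norm (shifted_iterate x (Suc n) - e) \<le> norm (shifted_iterate x n - e)"
    by (rule power2_le_imp_le) simp
  then show ?case
    using Suc.IH by linarith
qed simp

lemma dr_shadow_bounded:
  assumes "e \<in> nearest_A"
  shows "norm (dr_shadow x n) \<le> norm e + norm (shifted_iterate x 0 - e)"
proof -
  have "(norm (dr_shadow x n - e))\<^sup>2 \<le> (norm (shifted_iterate x n - e))\<^sup>2"
    using proj_affine_pythagoras[OF affine_A closed_A, of e "shifted_iterate x n"] assms
    by (simp add: dr_shadow_eq_proj_shifted)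
  then have "norm (dr_shadow x n - e) \<le> norm (shifted_iterate x n - e)"
    by (rule power2_le_imp_le) simp
  then have "norm (dr_shadow x n - e) \<le> norm (shifted_iterate x 0 - e)"
    using shifted_dist_le_initial[OF assms, of x n] by linarith
  then show ?thesis
    using norm_triangle_ineq[of e "dr_shadow x n - e"] by simp
qed

lemma dr_shadow_weak_cluster_point:
  assumes "strict_mono r" "weakly_converges (dr_shadow x \<circ> r) w"
  shows "w \<in> nearest_A"
proof -
  have "w \<in> A"
    by (rule weakly_converges_in_closed_convex[OF closed_A convex_A _ assms(2)])
      (simp add: dr_shadow_def proj_A_in)
  have "(\<lambda>k. g - dr_residual x (r k)) \<longlonglongrightarrow> g - 0"
    using LIMSEQ_subseq_LIMSEQ[OF dr_residual_tendsto_zero assms(1)]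
    by (intro tendsto_diff tendsto_const) (simp add: comp_def)
  from weakly_converges_add_tendsto[OF assms(2) this]
  have "weakly_converges (\<lambda>k. dr_shadow x (r k) + (g - dr_residual x (r k))) (w + g)"
    by (simp add: comp_def)
  have "dr_shadow x (r k) + (g - dr_residual x (r k)) \<in> B" for k
    by (simp add: dr_residual_def proj_B_in)
  then have "w + g \<in> B"
    using \<open>weakly_converges _ (w + g)\<close> by (rule weakly_converges_in_closed_convex[OF closed_B convex_B])
  then have "w \<in> (\<lambda>b. b - g) ` B"
    by (rule image_eqI[rotated]) simp
  then show ?thesis
    using \<open>w \<in> A\<close> by blast
qed

lemma dr_shadow_inner_convergent:
  assumes "e1 \<in> nearest_A" "e2 \<in> nearest_A"
  shows "convergent (\<lambda>n. inner (dr_shadow x n) (e2 - e1))"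
proof -
  have eq: "inner (dr_shadow x n) (e2 - e1) = ((norm (shifted_iterate x n - e1))\<^sup>2
      - (norm (shifted_iterate x n - e2))\<^sup>2 - inner e1 e1 + inner e2 e2) / 2" for n
  proof -
    have "inner (dr_shadow x n) (e2 - e1) = inner (shifted_iterate x n) (e2 - e1)"
      using proj_affine_orthogonal[OF affine_A closed_A, of e2 e1 "shifted_iterate x n"] assms
      by (simp add: dr_shadow_eq_proj_shifted inner_diff_left)
    also have "\<dots> = ((norm (shifted_iterate x n - e1))\<^sup>2
        - (norm (shifted_iterate x n - e2))\<^sup>2 - inner e1 e1 + inner e2 e2) / 2"
      unfolding power2_norm_eq_inner by (simp add: inner_diff_left inner_diff_right inner_commute)
    finally show ?thesis .
  qed
  obtain L1 L2 where
    "(\<lambda>n. (norm (shifted_iterate x n - e1))\<^sup>2) \<longlonglongrightarrow> L1"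
    "(\<lambda>n. (norm (shifted_iterate x n - e2))\<^sup>2) \<longlonglongrightarrow> L2"
    using shifted_dist_convergent[OF assms(1)] shifted_dist_convergent[OF assms(2)]
    unfolding convergent_def by blast
  then have "(\<lambda>n. inner (dr_shadow x n) (e2 - e1)) \<longlonglongrightarrow> (L1 - L2 - inner e1 e1 + inner e2 e2) / 2"
    unfolding eq by (intro tendsto_intros) simp_all
  then show ?thesis
    by (rule convergentI)
qed

theorem dr_shadow_weakly_converges: "\<exists>e\<in>nearest_A. weakly_converges (dr_shadow x) e"
proof -
  obtain e where "e \<in> nearest_A"
    using nearest_nonempty by blast
  show ?thesis
  proof (rule opial_weakly_converges)
    show "norm (dr_shadow x n) \<le> norm e + norm (shifted_iterate x 0 - e)" for n
      using \<open>e \<in> nearest_A\<close> by (rule dr_shadow_bounded)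
    show "w \<in> nearest_A" if "strict_mono r" "weakly_converges (dr_shadow x \<circ> r) w" for r w
      using that by (rule dr_shadow_weak_cluster_point)
    show "convergent (\<lambda>n. inner (dr_shadow x n) (e2 - e1))"
      if "e1 \<in> nearest_A" "e2 \<in> nearest_A" for e1 e2
      using that by (rule dr_shadow_inner_convergent)
  qed
qed

end

theorem theorem2p3:
  fixes A B :: "'a::{real_inner, complete_space} set" and x :: 'a
  assumes "affine A" and "closed A" and "A \<noteq> {}"
    and "convex B" and "closed B" and "B \<noteq> {}"
    and "proj (closure (mdiff B A)) 0 \<in> mdiff B A"
  shows "\<exists>e \<in> A \<inter> (\<lambda>b. b - proj (closure (mdiff B A)) 0) ` B.
           weakly_converges
             (\<lambda>n. proj A (((\<lambda>y. y - proj A y + proj B (reflector A y)) ^^ n) x)) e"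
proof -
  define g where "g = proj (closure (mdiff B A)) 0"
  interpret douglas_rachford_gap A B g
  proof
    have "convex (closure (mdiff B A))"
      using \<open>affine A\<close> \<open>convex B\<close> by (simp add: convex_mdiff affine_imp_convex)
    moreover have "b - a \<in> closure (mdiff B A)" if "a \<in> A" "b \<in> B" for a b
      using that closure_subset[of "mdiff B A"] unfolding mdiff_def by blast
    ultimately show "inner g g \<le> inner g (b - a)" if "a \<in> A" "b \<in> B" for a b
      unfolding g_def using that by (simp add: proj_zero_inner_le)
    obtain a b where "a \<in> A" "b \<in> B" "g = b - a"
      using assms(7) unfolding g_def mdiff_def by blast
    then show "A \<inter> (\<lambda>b. b - g) ` B \<noteq> {}"
      by force
  qed fact+
  have "douglas_rachford A B = (\<lambda>y. y - proj A y + proj B (reflector A y))"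
    by (simp add: fun_eq_iff douglas_rachford_def)
  then show ?thesis
    using dr_shadow_weakly_converges[of x] unfolding dr_shadow_def g_def by simp
qed

end
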